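(* For every integer $r\ge1$, for both choices of sign, and all real $x$, $$\operatorname{sech}^{2r+1}x=\frac{(\pm1)^{r+1}}{r\,(2r-1)!!}\Big(\frac{d}{d\sinh x}\Big)^{r+1}e^{\pm rx},$$ where $\frac{d}{d\sinh x}$ denotes differentiation with respect to the variable $u=\sinh x$ (i.e. $e^{\pm rx}$ is regarded as the function $(\sqrt{1+u^2}\pm u)^{r}$ of $u$, differentiated $r+1$ times in $u$, and then evaluated at $u=\sinh x$), and $(2r-1)!!=1\cdot3\cdots(2r-1)$. *)

theory Defs
  imports "HOL-Analysis.Analysis"
begin

definition oddfact :: "nat \<Rightarrow> nat" where
  "oddfact r = (\<Prod>k=1..r. 2 * k - 1)"

definition sech :: "real \<Rightarrow> real" where
  "sech x = 1 / cosh x"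

end

theory Submission
  imports Defs
begin

text \<open>
  Put \<open>c = \<surd>(1 + u\<^sup>2)\<close>, \<open>f = (c + s u)\<^sup>r\<close> with \<open>s\<^sup>2 = 1\<close>, and write \<open>f\<^sub>n\<close> for the \<open>n\<close>-th
  derivative. Then \<open>c f\<^sub>1 = r s f\<close>, hence \<open>(1 + u\<^sup>2) f\<^sub>2 + u f\<^sub>1 = r\<^sup>2 f\<close>, and differentiating
  \<open>n\<close> more times gives \<open>(1 + u\<^sup>2) f\<^sub>n\<^sub>+\<^sub>2 + (2n + 1) u f\<^sub>n\<^sub>+\<^sub>1 = (r\<^sup>2 - n\<^sup>2) f\<^sub>n\<close>.
  For \<open>n = r\<close> the right-hand side vanishes, so \<open>g = f\<^sub>r\<^sub>+\<^sub>1\<close> solves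
  \<open>(1 + u\<^sup>2) g' + (2r + 1) u g = 0\<close>, i.e. \<open>g = g(0) / c\<^sup>2\<^sup>r\<^sup>+\<^sup>1\<close>, and \<open>c = cosh x\<close> at \<open>u = sinh x\<close>.
  At \<open>u = 0\<close> the same identity is the recurrence \<open>f\<^sub>n\<^sub>+\<^sub>2(0) = (r\<^sup>2 - n\<^sup>2) f\<^sub>n(0)\<close>, which
  descends from \<open>f\<^sub>r\<^sub>+\<^sub>1(0)\<close> in steps \<open>(r - n)(r + n) = (2i - 1)(2r - 2i + 1)\<close> to
  \<open>f(0) = 1\<close> or \<open>f\<^sub>1(0) = r s\<close>, giving \<open>g(0) = s\<^sup>r\<^sup>+\<^sup>1 r (2r - 1)!!\<close>.
\<close>

lemma oddfact_0: "oddfact 0 = 1"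
  by (simp add: oddfact_def)

lemma oddfact_Suc: "oddfact (Suc n) = (2 * n + 1) * oddfact n"
  by (simp add: oddfact_def prod.cl_ivl_Suc)

lemma oddfact_pos: "0 < oddfact n"
  by (induction n) (simp_all add: oddfact_0 oddfact_Suc)

lemma square_difference_recurrence_descent:
  fixes a :: "nat \<Rightarrow> real"
  assumes rec: "\<And>n. a (n + 2) = ((real r)\<^sup>2 - (real n)\<^sup>2) * a n"
    and "2 * i \<le> r + 1"
  shows "a (r + 1) * oddfact (r - i) = oddfact i * oddfact r * a (r + 1 - 2 * i)"
  using assms(2)
proof (induction i)
  case 0
  then show ?case by (simp add: oddfact_0)
next
  case (Suc i)
  define n where "n = r + 1 - 2 * Suc i"
  have n2: "r + 1 - 2 * i = n + 2" and rn: "real n = real r - 1 - 2 * real i"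
    using Suc.prems by (simp_all add: n_def of_nat_diff)
  have step: "a (n + 2) = (2 * real i + 1) * (2 * real r - 2 * real i - 1) * a n"
    unfolding rec rn by (simp add: power2_eq_square algebra_simps)
  have "r - i = Suc (r - Suc i)" and "real (r - Suc i) = real r - real i - 1"
    using Suc.prems by (simp_all add: of_nat_diff)
  then have top: "real (oddfact (r - i)) = (2 * real r - 2 * real i - 1) * oddfact (r - Suc i)"
    by (simp only: oddfact_Suc of_nat_mult of_nat_add) (simp add: algebra_simps)
  have pos: "0 < 2 * real r - 2 * real i - 1" using Suc.prems by simp
  have "(2 * real r - 2 * real i - 1) * (a (r + 1) * oddfact (r - Suc i))
      = (2 * real r - 2 * real i - 1) * (oddfact (Suc i) * oddfact r * a n)"
    using Suc.IH Suc.prems unfolding n2 step top by (simp add: oddfact_Suc algebra_simps)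
  then show ?case using pos by (simp add: n_def)
qed

lemma square_difference_recurrence_value:
  fixes a :: "nat \<Rightarrow> real"
  assumes rec: "\<And>n. a (n + 2) = ((real r)\<^sup>2 - (real n)\<^sup>2) * a n"
  shows "a (r + 1) = oddfact r * (if even r then a 1 else real r * a 0)"
proof (cases "even r")
  case True
  then obtain i where r: "r = 2 * i" by blast
  have "a (r + 1) * oddfact i = oddfact i * oddfact r * a 1"
    using square_difference_recurrence_descent[OF rec, of i] r by simp
  then show ?thesis using True oddfact_pos[of i] by simp
next
  case False
  then obtain i where r: "r = 2 * i + 1" using oddE by blast
  have "oddfact (Suc i) = r * oddfact i" using r by (simp add: oddfact_Suc)
  moreover have "a (r + 1) * oddfact i = oddfact (Suc i) * oddfact r * a 0"
    using square_difference_recurrence_descent[OF rec, of "Suc i"] r by simp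
  ultimately show ?thesis using False oddfact_pos[of i] by simp
qed

lemma sqrt_one_plus_square_pos: "0 < sqrt (1 + u\<^sup>2 :: real)"
  by (simp add: add_pos_nonneg)

lemma has_real_derivative_sqrt_one_plus_square:
  "((\<lambda>u. sqrt (1 + u\<^sup>2)) has_real_derivative u * (1 / sqrt (1 + u\<^sup>2))) (at u)"
proof -
  have "((\<lambda>u. sqrt (1 + u\<^sup>2)) has_real_derivative inverse (sqrt (1 + u\<^sup>2)) / 2 * (0 + 2 * u)) (at u)"
    using sqrt_one_plus_square_pos[of u]
    by (auto intro!: derivative_eq_intros DERIV_real_sqrt simp: power2_eq_square)
  then show ?thesis by (simp add: field_simps)
qed

lemma has_real_derivative_inverse_sqrt_one_plus_square:
  "((\<lambda>u. 1 / sqrt (1 + u\<^sup>2)) has_real_derivative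
     (-1) * u * (1 / sqrt (1 + u\<^sup>2)) * (1 / sqrt (1 + u\<^sup>2)) * (1 / sqrt (1 + u\<^sup>2))) (at u)"
proof -
  have "((\<lambda>u. 1 / sqrt (1 + u\<^sup>2)) has_real_derivative
     - (u * (1 / sqrt (1 + u\<^sup>2))) / (sqrt (1 + u\<^sup>2))\<^sup>2) (at u)"
    using sqrt_one_plus_square_pos[of u] has_real_derivative_sqrt_one_plus_square[of u]
    by (auto intro!: derivative_eq_intros simp: power2_eq_square inverse_eq_divide)
  then show ?thesis
    using sqrt_one_plus_square_pos[of u] by (simp add: field_simps power2_eq_square)
qed

text \<open>Being closed under differentiation, this algebra provides the smoothness needed below.\<close>

inductive sqrt_poly :: "(real \<Rightarrow> real) \<Rightarrow> bool" where
  sqrt_poly_const: "sqrt_poly (\<lambda>u. a)"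
| sqrt_poly_id: "sqrt_poly (\<lambda>u. u)"
| sqrt_poly_sqrt: "sqrt_poly (\<lambda>u. sqrt (1 + u\<^sup>2))"
| sqrt_poly_inverse_sqrt: "sqrt_poly (\<lambda>u. 1 / sqrt (1 + u\<^sup>2))"
| sqrt_poly_add: "sqrt_poly f \<Longrightarrow> sqrt_poly g \<Longrightarrow> sqrt_poly (\<lambda>u. f u + g u)"
| sqrt_poly_mult: "sqrt_poly f \<Longrightarrow> sqrt_poly g \<Longrightarrow> sqrt_poly (\<lambda>u. f u * g u)"

lemma sqrt_poly_power: "sqrt_poly f \<Longrightarrow> sqrt_poly (\<lambda>u. f u ^ n)"
  by (induction n) (simp_all add: sqrt_poly_const sqrt_poly_mult)

lemma sqrt_poly_derivative_exists:
  "sqrt_poly f \<Longrightarrow> \<exists>f'. sqrt_poly f' \<and> (\<forall>u. (f has_real_derivative f' u) (at u))"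
proof (induction rule: sqrt_poly.induct)
  case sqrt_poly_const
  show ?case by (intro exI[of _ "\<lambda>u. 0"]) (simp add: sqrt_poly.sqrt_poly_const)
next
  case sqrt_poly_id
  show ?case by (intro exI[of _ "\<lambda>u. 1"]) (simp add: sqrt_poly.sqrt_poly_const)
next
  case sqrt_poly_sqrt
  show ?case
    using has_real_derivative_sqrt_one_plus_square
      sqrt_poly.sqrt_poly_mult[OF sqrt_poly.sqrt_poly_id sqrt_poly.sqrt_poly_inverse_sqrt]
    by (intro exI[of _ "\<lambda>u. u * (1 / sqrt (1 + u\<^sup>2))"]) blast
next
  case sqrt_poly_inverse_sqrt
  show ?case
  proof (intro exI conjI allI)
    show "((\<lambda>u. 1 / sqrt (1 + u\<^sup>2)) has_real_derivative
       (-1) * u * (1 / sqrt (1 + u\<^sup>2)) * (1 / sqrt (1 + u\<^sup>2)) * (1 / sqrt (1 + u\<^sup>2))) (at u)" for u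
      by (rule has_real_derivative_inverse_sqrt_one_plus_square)
    show "sqrt_poly (\<lambda>u. (-1) * u * (1 / sqrt (1 + u\<^sup>2)) * (1 / sqrt (1 + u\<^sup>2)) * (1 / sqrt (1 + u\<^sup>2)))"
      by (intro sqrt_poly.intros)
  qed
next
  case (sqrt_poly_add f g)
  then obtain f' g' where "sqrt_poly f'" "sqrt_poly g'"
    "\<forall>u. (f has_real_derivative f' u) (at u)" "\<forall>u. (g has_real_derivative g' u) (at u)"
    by blast
  then show ?case
    by (intro exI[of _ "\<lambda>u. f' u + g' u"]) (auto intro!: sqrt_poly.sqrt_poly_add DERIV_add)
next
  case (sqrt_poly_mult f g)
  then obtain f' g' where "sqrt_poly f'" "sqrt_poly g'"
    "\<forall>u. (f has_real_derivative f' u) (at u)" "\<forall>u. (g has_real_derivative g' u) (at u)"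
    by blast
  with sqrt_poly_mult.hyps show ?case
    by (intro exI[of _ "\<lambda>u. f' u * g u + g' u * f u"])
      (auto intro!: sqrt_poly.sqrt_poly_add sqrt_poly.sqrt_poly_mult DERIV_mult)
qed

lemma sqrt_poly_deriv:
  assumes "sqrt_poly f"
  shows "sqrt_poly (deriv f)" and "(f has_real_derivative deriv f u) (at u)"
proof -
  obtain f' where f': "sqrt_poly f'" "\<forall>u. (f has_real_derivative f' u) (at u)"
    using sqrt_poly_derivative_exists[OF assms] by blast
  then have "deriv f = f'" by (intro ext) (simp add: DERIV_imp_deriv)
  with f' show "sqrt_poly (deriv f)" and "(f has_real_derivative deriv f u) (at u)" by simp_all
qed

lemma sqrt_poly_higher_deriv:
  assumes "sqrt_poly f"
  shows "((deriv ^^ n) f has_real_derivative (deriv ^^ Suc n) f u) (at u)"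
proof -
  have "sqrt_poly ((deriv ^^ n) f)"
    using assms by (induction n) (auto intro: sqrt_poly_deriv)
  then show ?thesis by (simp add: sqrt_poly_deriv)
qed

lemma higher_deriv_ode:
  fixes f :: "real \<Rightarrow> real" and \<mu> :: real
  assumes D: "\<And>n u. ((deriv ^^ n) f has_real_derivative (deriv ^^ Suc n) f u) (at u)"
    and ode: "\<And>u. (1 + u\<^sup>2) * (deriv ^^ 2) f u + u * deriv f u = \<mu> * f u"
  shows "(1 + u\<^sup>2) * (deriv ^^ (n + 2)) f u + (2 * real n + 1) * u * (deriv ^^ (n + 1)) f u
           = (\<mu> - (real n)\<^sup>2) * (deriv ^^ n) f u"
proof (induction n arbitrary: u)
  case 0
  show ?case using ode[of u] by (simp add: numeral_2_eq_2)
next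
  case (Suc n)
  let ?F = "\<lambda>k. (deriv ^^ k) f"
  have lhs: "((\<lambda>u. (1 + u\<^sup>2) * ?F (n + 2) u + (2 * real n + 1) * u * ?F (n + 1) u) has_real_derivative
      2 * u * ?F (n + 2) u + ?F (n + 3) u * (1 + u\<^sup>2)
      + ((2 * real n + 1) * ?F (n + 1) u + ?F (n + 2) u * ((2 * real n + 1) * u))) (at u)"
    using D[of "n + 2" u] D[of "n + 1" u]
    by (auto intro!: derivative_eq_intros simp: numeral_3_eq_3)
  have rhs: "((\<lambda>u. (\<mu> - (real n)\<^sup>2) * ?F n u) has_real_derivative
      (\<mu> - (real n)\<^sup>2) * ?F (n + 1) u) (at u)"
    using D[of n u] by (auto intro!: derivative_eq_intros)
  have "(\<lambda>u. (1 + u\<^sup>2) * ?F (n + 2) u + (2 * real n + 1) * u * ?F (n + 1) u)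
      = (\<lambda>u. (\<mu> - (real n)\<^sup>2) * ?F n u)"
    using Suc.IH by blast
  then have "2 * u * ?F (n + 2) u + ?F (n + 3) u * (1 + u\<^sup>2)
      + ((2 * real n + 1) * ?F (n + 1) u + ?F (n + 2) u * ((2 * real n + 1) * u))
      = (\<mu> - (real n)\<^sup>2) * ?F (n + 1) u"
    using DERIV_unique[OF lhs] rhs by simp
  then show ?case by (simp add: numeral_3_eq_3 algebra_simps power2_eq_square)
qed

lemma linear_ode_solution:
  fixes g g' :: "real \<Rightarrow> real"
  assumes D: "\<And>u. (g has_real_derivative g' u) (at u)"
    and ode: "\<And>u. (1 + u\<^sup>2) * g' u + real k * u * g u = 0"
  shows "g u = g 0 / sqrt (1 + u\<^sup>2) ^ k"
proof -
  define h where "h v = g v * sqrt (1 + v\<^sup>2) ^ k" for v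
  have "(h has_real_derivative 0) (at v)" for v
  proof -
    define c where "c = sqrt (1 + v\<^sup>2)"
    have c: "0 < c" "c * c = 1 + v\<^sup>2"
      using sqrt_one_plus_square_pos[of v] by (simp_all add: c_def add_nonneg_nonneg)
    have ck: "real k * c ^ (k - Suc 0) * c = real k * c ^ k" by (cases k) auto
    let ?h' = "g' v * c ^ k + real k * (v * (1 / c) * c ^ (k - Suc 0)) * g v"
    have h': "(h has_real_derivative ?h') (at v)"
      unfolding h_def c_def
      by (intro DERIV_mult D DERIV_power has_real_derivative_sqrt_one_plus_square)
    have "c * c * ?h' = c * c * g' v * c ^ k + real k * c ^ (k - Suc 0) * c * v * g v"
      using c(1) by (simp add: field_simps)
    also have "\<dots> = c ^ k * ((1 + v\<^sup>2) * g' v + real k * v * g v)"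
      unfolding ck c(2) by (simp add: algebra_simps)
    also have "\<dots> = 0" by (simp add: ode)
    finally have "?h' = 0" using c(1) by simp
    with h' show ?thesis by simp
  qed
  then have "h u = h 0" by (intro DERIV_isconst_all) auto
  then show ?thesis
    using sqrt_one_plus_square_pos[of u] by (simp add: h_def field_simps)
qed

context
  fixes s :: real and r :: nat
  assumes s_sq: "s\<^sup>2 = 1"
begin

lemma sqrt_shift_power_poly: "sqrt_poly (\<lambda>u. (sqrt (1 + u\<^sup>2) + s * u) ^ r)"
  by (intro sqrt_poly_power sqrt_poly_add sqrt_poly_sqrt sqrt_poly_mult sqrt_poly_const sqrt_poly_id)

text \<open>\<open>\<surd>(1 + u\<^sup>2) + s u = exp (s arsinh u)\<close>, so this power is \<open>e\<^sup>s\<^sup>r\<^sup>x\<close> at \<open>u = sinh x\<close>.\<close>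

lemma sqrt_shift_power_ode:
  "sqrt (1 + u\<^sup>2) * deriv (\<lambda>u. (sqrt (1 + u\<^sup>2) + s * u) ^ r) u
     = real r * s * (sqrt (1 + u\<^sup>2) + s * u) ^ r"
proof -
  define c where "c = sqrt (1 + u\<^sup>2)"
  define w where "w = c + s * u"
  have "((\<lambda>u. (sqrt (1 + u\<^sup>2) + s * u) ^ r) has_real_derivative
      real r * ((u * (1 / c) + s * 1) * w ^ (r - Suc 0))) (at u)"
    unfolding w_def c_def
    by (intro DERIV_power DERIV_add DERIV_cmult has_real_derivative_sqrt_one_plus_square DERIV_ident)
  then have "c * deriv (\<lambda>u. (sqrt (1 + u\<^sup>2) + s * u) ^ r) u
      = real r * (c * (u * (1 / c) + s)) * w ^ (r - Suc 0)"
    by (simp add: DERIV_imp_deriv mult_ac)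
  also have "c * (u * (1 / c) + s) = s * w"
    using sqrt_one_plus_square_pos[of u] s_sq
    by (simp add: c_def w_def field_simps power2_eq_square)
  also have "real r * (s * w) * w ^ (r - Suc 0) = real r * s * w ^ r"
    by (cases r) auto
  finally show ?thesis by (simp add: c_def w_def)
qed

lemma sqrt_shift_power_ode2:
  "(1 + u\<^sup>2) * (deriv ^^ 2) (\<lambda>u. (sqrt (1 + u\<^sup>2) + s * u) ^ r) u
     + u * deriv (\<lambda>u. (sqrt (1 + u\<^sup>2) + s * u) ^ r) u
   = (real r)\<^sup>2 * (sqrt (1 + u\<^sup>2) + s * u) ^ r"
proof -
  define f where "f = (\<lambda>u. (sqrt (1 + u\<^sup>2) + s * u) ^ r)"
  define c where "c = sqrt (1 + u\<^sup>2)"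
  have c: "c * c = 1 + u\<^sup>2" "c * (u * (1 / c)) = u"
    using sqrt_one_plus_square_pos[of u] by (simp_all add: c_def add_nonneg_nonneg)
  have lhs: "((\<lambda>u. sqrt (1 + u\<^sup>2) * deriv f u) has_real_derivative
      u * (1 / c) * deriv f u + (deriv ^^ 2) f u * c) (at u)"
    using sqrt_poly_higher_deriv[OF sqrt_shift_power_poly, of 1 u] unfolding c_def f_def
    by (intro DERIV_mult has_real_derivative_sqrt_one_plus_square) (simp add: numeral_2_eq_2)
  have rhs: "((\<lambda>u. real r * s * f u) has_real_derivative real r * s * deriv f u) (at u)"
    using sqrt_poly_deriv(2)[OF sqrt_shift_power_poly] unfolding f_def by (intro DERIV_cmult)
  have "(\<lambda>u. sqrt (1 + u\<^sup>2) * deriv f u) = (\<lambda>u. real r * s * f u)"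
    unfolding f_def by (rule ext) (rule sqrt_shift_power_ode)
  then have "u * (1 / c) * deriv f u + (deriv ^^ 2) f u * c = real r * s * deriv f u"
    using DERIV_unique[OF lhs] rhs by simp
  then have "u * deriv f u + (1 + u\<^sup>2) * (deriv ^^ 2) f u = real r * s * (c * deriv f u)"
    using c by algebra
  also have "c * deriv f u = real r * s * f u"
    unfolding c_def f_def by (rule sqrt_shift_power_ode)
  also have "real r * s * (real r * s * f u) = (real r)\<^sup>2 * s\<^sup>2 * f u"
    by (simp add: power2_eq_square mult_ac)
  finally show ?thesis using s_sq unfolding f_def by (simp add: add.commute)
qed

lemma higher_deriv_sqrt_shift_power_at_zero:
  "(deriv ^^ (r + 1)) (\<lambda>u. (sqrt (1 + u\<^sup>2) + s * u) ^ r) 0 = s ^ (r + 1) * real r * oddfact r"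
proof -
  define a where "a n = (deriv ^^ n) (\<lambda>u. (sqrt (1 + u\<^sup>2) + s * u) ^ r) 0" for n
  have "a (n + 2) = ((real r)\<^sup>2 - (real n)\<^sup>2) * a n" for n
    using higher_deriv_ode[OF sqrt_poly_higher_deriv[OF sqrt_shift_power_poly]
        sqrt_shift_power_ode2, of 0 n]
    by (simp add: a_def)
  then have "a (r + 1) = oddfact r * (if even r then a 1 else real r * a 0)"
    by (rule square_difference_recurrence_value)
  moreover have "a 0 = 1" and "a 1 = real r * s"
    using sqrt_shift_power_ode[of 0] by (simp_all add: a_def)
  moreover have "s ^ (r + 1) = (if even r then s else 1)"
    using s_sq by (auto elim!: evenE oddE simp: power_mult power2_eq_square)
  ultimately show ?thesis by (simp add: a_def)
qed

lemma higher_deriv_sqrt_shift_power: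
  "(deriv ^^ (r + 1)) (\<lambda>u. (sqrt (1 + u\<^sup>2) + s * u) ^ r) u
     = s ^ (r + 1) * real r * oddfact r / sqrt (1 + u\<^sup>2) ^ (2 * r + 1)"
proof -
  let ?f = "\<lambda>u. (sqrt (1 + u\<^sup>2) + s * u) ^ r"
  have "((deriv ^^ (r + 1)) ?f has_real_derivative (deriv ^^ (r + 2)) ?f u) (at u)" for u
    using sqrt_poly_higher_deriv[OF sqrt_shift_power_poly, of "r + 1" u] by simp
  moreover have "(1 + u\<^sup>2) * (deriv ^^ (r + 2)) ?f u + real (2 * r + 1) * u * (deriv ^^ (r + 1)) ?f u = 0" for u
    using higher_deriv_ode[OF sqrt_poly_higher_deriv[OF sqrt_shift_power_poly]
        sqrt_shift_power_ode2, of u r]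
    by (simp add: algebra_simps)
  ultimately have "(deriv ^^ (r + 1)) ?f u = (deriv ^^ (r + 1)) ?f 0 / sqrt (1 + u\<^sup>2) ^ (2 * r + 1)"
    by (rule linear_ode_solution)
  then show ?thesis by (simp only: higher_deriv_sqrt_shift_power_at_zero)
qed

end

theorem mainTheorem9:
  fixes r :: nat and s :: real and x :: real
  assumes "r \<ge> 1" and "s = 1 \<or> s = -1"
  shows "sech x ^ (2*r+1) =
    s ^ (r+1) / (real r * real (oddfact r)) *
    (deriv ^^ (r+1)) (\<lambda>u. (sqrt (1 + u\<^sup>2) + s * u) ^ r) (sinh x)"
proof -
  have s_sq: "s\<^sup>2 = 1" using assms(2) by auto
  have "sqrt (1 + (sinh x)\<^sup>2) = cosh x"
    by (rule real_sqrt_unique) (auto simp: cosh_square_eq)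
  then have "(deriv ^^ (r+1)) (\<lambda>u. (sqrt (1 + u\<^sup>2) + s * u) ^ r) (sinh x)
      = s ^ (r+1) * real r * oddfact r / cosh x ^ (2*r+1)"
    using higher_deriv_sqrt_shift_power[OF s_sq] by simp
  moreover have "s ^ (r+1) * s ^ (r+1) = 1"
    using s_sq by (simp add: power_mult_distrib[symmetric] power2_eq_square del: power_Suc)
  ultimately show ?thesis
    using assms(1) oddfact_pos[of r] by (simp add: sech_def power_one_over field_simps)
qed

end
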